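(* Let $A=\{a_1<\cdots<a_k\}$ be a finite set of positive integers. There exists a bijection $\phi:\mathcal{BP}^{(1)}(A)\to\mathcal{BP}^{(3)}(A)$ that preserves the box-neighbor-set.
   Context: Let $\Box$ be an extra symbol. A box-permutation on $A$ is a word $w$ over $A\cup\{\Box\}$ in which each element of $A$ appears exactly once, such that: if $\Box$ does not occur then $w=a_1a_2\cdots a_k$; otherwise the (box-free) segment before the first box and the segment after the last box each have length at least one and are increasing, and every segment between two successive boxes has length at least two and is increasing. $\mathcal{BP}(A)$ is the set of box-permutations on $A$. Positions in a box-permutation $\pi=\pi_1\pi_2\cdots\pi_n$ count boxes as letters. $\mathcal{BP}^{(1)}(A)$ is the set of $\pi\in\mathcal{BP}(A)$ such that either $a_1$ is in an even position, or $\pi_1=a_1$ and $\pi_2=\Box$. $\mathcal{BP}^{(3)}(A)$ is the set of $\pi\in\mathcal{BP}(A)$ in which $a_1$ occupies an odd position other than the first. The box-neighbor-set of a box-permutation is the set of all 2-subsets $\{a,b\}$ such that $a,b$ are the two neighbors of some box. *)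

theory Defs
  imports Main
begin

text \<open>A word over A \<union> {box} is a list of type nat option; None is the box,
  Some a is the letter a. Positions are 1-based: list index i is position i+1.\<close>

fun segs :: "'a option list \<Rightarrow> 'a list list" where
  "segs [] = [[]]"
| "segs (None # w) = [] # segs w"
| "segs (Some a # w) = (case segs w of s # ss \<Rightarrow> (a # s) # ss | [] \<Rightarrow> [[a]])"

definition BP :: "nat set \<Rightarrow> nat option list set" where
  "BP A = {w. (\<forall>a\<in>A. count_list w (Some a) = 1) \<and> set w \<subseteq> insert None (Some ` A) \<and>
     (if None \<notin> set w then w = map Some (sorted_list_of_set A)
      else (let ss = segs w in
              length (hd ss) \<ge> 1 \<and> length (last ss) \<ge> 1 \<and>
              (\<forall>s\<in>set ss. sorted_wrt (<) s) \<and>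
              (\<forall>j. 0 < j \<and> j < length ss - 1 \<longrightarrow> length (ss ! j) \<ge> 2)))}"

definition BP1 :: "nat set \<Rightarrow> nat option list set" where
  "BP1 A = {w \<in> BP A.
     (\<exists>i<length w. w ! i = Some (Min A) \<and> even (i + 1))
     \<or> (length w \<ge> 2 \<and> w ! 0 = Some (Min A) \<and> w ! 1 = None)}"

definition BP3 :: "nat set \<Rightarrow> nat option list set" where
  "BP3 A = {w \<in> BP A. \<exists>i<length w. w ! i = Some (Min A) \<and> odd (i + 1) \<and> i \<noteq> 0}"

definition box_nbrs :: "nat option list \<Rightarrow> nat set set" where
  "box_nbrs w = {{a, b} | a b i. 0 < i \<and> i + 1 < length w \<and> w ! i = None \<and>
                    w ! (i - 1) = Some a \<and> w ! (i + 1) = Some b}"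

end

theory Submission
  imports Defs
begin

text \<open>Let a = Min A. Being the least letter, a begins its segment, so in a word of BP1(A) or
  BP3(A) either a directly follows a box, as in x box a, or a is the first letter and is followed by
  a box, as in a box x. Either way a has exactly one box neighbour x, and {a, x} is determined by
  the box-neighbour set S. Cutting out x box a turns a word of the fibre over S into a pair (u, v) of
  words on A - {a, x}, and the parity of |u| decides between BP1 and BP3; the remaining words
  a box x v of BP1 correspond to the words v. So the two fibres have the same size as soon as the
  signed count of the pairs, weighted by (-1)^|u|, equals the number of words v. This is proved by
  induction on the alphabet and on a bound t for the last letter of u: the pairs whose u ends in
  the block t (or z box t) and the words starting with the same block both reduce to a smaller
  alphabet, with opposite signs. Equal fibres then give the bijection.\<close>

fun letters :: "'a option list \<Rightarrow> 'a list" where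
  "letters [] = []"
| "letters (None # w) = letters w"
| "letters (Some a # w) = a # letters w"

lemma letters_append [simp]: "letters (u @ v) = letters u @ letters v"
  by (induction u rule: letters.induct) auto

lemma count_list_letters: "count_list w (Some a) = count_list (letters w) a"
  by (induction w rule: letters.induct) auto

lemma set_letters: "set (letters w) = {a. Some a \<in> set w}"
  by (induction w rule: letters.induct) auto

lemma set_subset_letters: "set w \<subseteq> insert None (Some ` set (letters w))"
  by (induction w rule: letters.induct) auto

lemma map_Some_letters: "None \<notin> set w \<Longrightarrow> map Some (letters w) = w"
  by (induction w rule: letters.induct) auto

lemma distinct_iff_count_list_le_1: "distinct xs \<longleftrightarrow> (\<forall>x. count_list xs x \<le> 1)"
proof (induction xs)
  case (Cons y xs)
  have "(\<forall>x. count_list (y # xs) x \<le> 1) \<longleftrightarrow> count_list xs y = 0 \<and> (\<forall>x. count_list xs x \<le> 1)"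
  proof
    assume le: "\<forall>x. count_list (y # xs) x \<le> 1"
    then have "\<forall>x. count_list xs x \<le> 1"
      by (metis count_list.simps(2) le_SucI le_add1 order_trans Suc_eq_plus1)
    with le show "count_list xs y = 0 \<and> (\<forall>x. count_list xs x \<le> 1)"
      using le[rule_format, of y] by simp
  qed auto
  then show ?case using Cons.IH by (simp add: count_list_0_iff)
qed simp

lemma distinct_set_eq_iff_count_list:
  "(\<forall>a\<in>A. count_list xs a = 1) \<and> set xs \<subseteq> A \<longleftrightarrow> distinct xs \<and> set xs = A"
proof
  assume hyp: "(\<forall>a\<in>A. count_list xs a = 1) \<and> set xs \<subseteq> A"
  then have "count_list xs x \<le> 1" for x
  proof (cases "x \<in> A")
    case False
    with hyp have "x \<notin> set xs" by blast
    then show ?thesis by simp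
  qed (use hyp in simp)
  moreover have "A \<subseteq> set xs"
    using hyp by (metis count_list_0_iff one_neq_zero subsetI)
  ultimately show "distinct xs \<and> set xs = A"
    using hyp distinct_iff_count_list_le_1 by blast
next
  assume hyp: "distinct xs \<and> set xs = A"
  then have "count_list xs a = 1" if "a \<in> A" for a
    using that distinct_iff_count_list_le_1[of xs] count_list_0_iff[of xs a]
    by (metis le_neq_implies_less less_one)
  with hyp show "(\<forall>a\<in>A. count_list xs a = 1) \<and> set xs \<subseteq> A" by blast
qed

lemma set_subset_insert_None_iff: "set w \<subseteq> insert None (Some ` A) \<longleftrightarrow> set (letters w) \<subseteq> A"
  by (induction w rule: letters.induct) auto

text \<open>The box-permutation conditions read locally, from left to right: a box is neither first nor
  last, it is followed by a letter which is not itself followed by a box (inner segments have at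
  least two letters), and letters increase within a segment.\<close>

fun wf_box_word :: "'a::linorder option list \<Rightarrow> bool" where
  "wf_box_word [] = True"
| "wf_box_word [Some a] = True"
| "wf_box_word (Some a # Some b # r) = (a < b \<and> wf_box_word (Some b # r))"
| "wf_box_word (Some a # None # Some b # r) = ((r = [] \<or> hd r \<noteq> None) \<and> wf_box_word (Some b # r))"
| "wf_box_word [Some a, None] = False"
| "wf_box_word (Some a # None # None # r) = False"
| "wf_box_word (None # r) = False"

lemma wf_hd_letter: "wf_box_word w \<Longrightarrow> w \<noteq> [] \<Longrightarrow> hd w = Some (hd (letters w))"
  by (induction w rule: wf_box_word.induct) auto

lemma wf_last_letter: "wf_box_word w \<Longrightarrow> w \<noteq> [] \<Longrightarrow> last w = Some (last (letters w))"
  by (induction w rule: wf_box_word.induct) auto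

lemma wf_hd_not_box: "wf_box_word w \<Longrightarrow> w = [] \<or> hd w \<noteq> None"
  using wf_hd_letter by fastforce

lemma wf_last_not_box: "wf_box_word w \<Longrightarrow> w = [] \<or> last w \<noteq> None"
  using wf_last_letter by fastforce

lemma wf_letters_nonempty: "wf_box_word w \<Longrightarrow> w \<noteq> [] \<Longrightarrow> letters w \<noteq> []"
  by (induction w rule: wf_box_word.induct) auto

lemma wf_hd_letters_in: "wf_box_word w \<Longrightarrow> w \<noteq> [] \<Longrightarrow> hd (letters w) \<in> set (letters w)"
  by (metis hd_in_set wf_letters_nonempty)

lemma wf_length: "wf_box_word w \<Longrightarrow> length w \<le> 2 * length (letters w)"
  by (induction w rule: wf_box_word.induct) auto

lemma wf_map_Some: "wf_box_word (map Some xs) \<longleftrightarrow> sorted_wrt (<) xs"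
proof (induction xs)
  case (Cons x xs)
  then show ?case by (cases xs) (auto intro: order.strict_trans)
qed simp

lemma wf_append:
  assumes "u = [] \<or> last u \<noteq> None" "v = [] \<or> hd v \<noteq> None"
  shows "wf_box_word (u @ v) \<longleftrightarrow>
    wf_box_word u \<and> wf_box_word v \<and> (u = [] \<or> v = [] \<or> last (letters u) < hd (letters v))"
  using assms
proof (induction u rule: wf_box_word.induct)
  case (2 a)
  then show ?case by (cases v) (auto simp: wf_hd_letter)
next
  case (3 a b r)
  then show ?case by simp
next
  case (4 a b r)
  have "(r @ v = [] \<or> hd (r @ v) \<noteq> None) \<longleftrightarrow> (r = [] \<or> hd r \<noteq> None)"
    using "4.prems"(2) by (cases r) auto
  with 4 show ?case by (cases r) auto
qed simp_all

lemma wf_snoc: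
  "u = [] \<or> last u \<noteq> None \<Longrightarrow>
    wf_box_word (u @ [Some t]) \<longleftrightarrow> wf_box_word u \<and> (u = [] \<or> last (letters u) < t)"
  using wf_append[of u "[Some t]"] by simp

lemma wf_snoc_boxed:
  "u = [] \<or> last u \<noteq> None \<Longrightarrow>
    wf_box_word (u @ [Some z, None, Some t]) \<longleftrightarrow> wf_box_word u \<and> (u = [] \<or> last (letters u) < z)"
  using wf_append[of u "[Some z, None, Some t]"] by simp

lemma wf_Cons:
  "w = [] \<or> hd w \<noteq> None \<Longrightarrow>
    wf_box_word (Some t # w) \<longleftrightarrow> wf_box_word w \<and> (w = [] \<or> t < hd (letters w))"
  using wf_append[of "[Some t]" w] by simp

lemma wf_Cons_boxed:
  "w = [] \<or> hd w \<noteq> None \<Longrightarrow>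
    wf_box_word (Some t # None # Some z # w) \<longleftrightarrow> wf_box_word w \<and> (w = [] \<or> z < hd (letters w))"
  using wf_Cons[of w z] by simp

lemma wf_boxed_pair_iff:
  assumes "u = [] \<or> last u \<noteq> None" "v = [] \<or> hd v \<noteq> None"
  shows "wf_box_word (u @ [Some y, None, Some z] @ v) \<longleftrightarrow>
    wf_box_word u \<and> wf_box_word v \<and> (u = [] \<or> last (letters u) < y) \<and> (v = [] \<or> z < hd (letters v))"
  using wf_append[of "u @ [Some y, None, Some z]" v] wf_snoc_boxed[of u y z] assms by auto

lemma nat_cases_0_1_SucSuc:
  obtains "j = 0" | "j = 1" | k where "j = Suc (Suc k)"
  by (metis One_nat_def not0_implies_Suc)

lemma wf_nth_after_box:
  "wf_box_word w \<Longrightarrow> Suc j < length w \<Longrightarrow> w ! j = None \<Longrightarrow> w ! Suc j \<noteq> None"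
proof (induction w arbitrary: j rule: wf_box_word.induct)
  case (3 a b r)
  then show ?case by (cases j) auto
next
  case (4 a b r)
  then show ?case by (cases j rule: nat_cases_0_1_SucSuc) auto
qed auto

lemma wf_nth_two_after_box:
  "wf_box_word w \<Longrightarrow> Suc (Suc j) < length w \<Longrightarrow> w ! j = None \<Longrightarrow> w ! Suc (Suc j) \<noteq> None"
proof (induction w arbitrary: j rule: wf_box_word.induct)
  case (3 a b r)
  then show ?case by (cases j) auto
next
  case (4 a b r)
  then show ?case by (cases j rule: nat_cases_0_1_SucSuc) (auto, cases r, auto)
qed auto

lemma wf_nth_increasing:
  "wf_box_word w \<Longrightarrow> Suc j < length w \<Longrightarrow> w ! j = Some b \<Longrightarrow> w ! Suc j = Some c \<Longrightarrow> b < c"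
proof (induction w arbitrary: j rule: wf_box_word.induct)
  case (3 a b r)
  then show ?case by (cases j) auto
next
  case (4 a b r)
  then show ?case by (cases j rule: nat_cases_0_1_SucSuc) auto
qed auto

lemma wf_boxed_pair_neighbours:
  assumes wf: "wf_box_word (u @ [Some y, None, Some z] @ v)"
  shows "(u = [] \<or> last u \<noteq> None) \<and> (v = [] \<or> hd v \<noteq> None)"
proof -
  let ?w = "u @ [Some y, None, Some z] @ v"
  have box: "?w ! Suc (length u) = None" by (simp add: nth_append)
  have "last u \<noteq> None" if "u \<noteq> []"
  proof
    assume "last u = None"
    then have "?w ! (length u - 1) = None"
      using that by (simp add: nth_append last_conv_nth)
    then have "?w ! Suc (Suc (length u - 1)) \<noteq> None"
      by (rule wf_nth_two_after_box[OF wf, rotated]) simp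
    with box that show False by simp
  qed
  moreover have "hd v \<noteq> None" if "v \<noteq> []"
  proof
    assume "hd v = None"
    then have "?w ! Suc (Suc (Suc (length u))) = None"
      using that by (simp add: nth_append hd_conv_nth)
    moreover have "?w ! Suc (Suc (Suc (length u))) \<noteq> None"
      using wf_nth_two_after_box[OF wf _ box] that by simp
    ultimately show False by simp
  qed
  ultimately show ?thesis by blast
qed

lemma wf_Cons_cases:
  assumes "wf_box_word w" "w \<noteq> []"
  obtains (letter) t w' where "w = Some t # w'" "w' = [] \<or> hd w' \<noteq> None"
    | (boxed) t z w' where "w = Some t # None # Some z # w'" "w' = [] \<or> hd w' \<noteq> None"
  using assms by (cases w rule: wf_box_word.cases) auto

lemma wf_snoc_cases:
  assumes wf: "wf_box_word u" and ne: "u \<noteq> []"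
  obtains (letter) u' t where "u = u' @ [Some t]" "u' = [] \<or> last u' \<noteq> None"
    | (boxed) u' z t where "u = u' @ [Some z, None, Some t]" "u' = [] \<or> last u' \<noteq> None"
proof -
  obtain u0 t where u: "u = u0 @ [Some t]"
    using wf_last_letter[OF wf ne] ne by (metis append_butlast_last_id)
  show thesis
  proof (cases "u0 = [] \<or> last u0 \<noteq> None")
    case True
    with u show thesis by (rule letter)
  next
    case False
    then obtain u1 where u1: "u = u1 @ [None, Some t]"
      using u by (metis append_butlast_last_id append_Cons append_Nil append_assoc)
    have "u1 \<noteq> []" using wf u1 by (cases u1) auto
    moreover have "last u1 \<noteq> None"
    proof
      assume "last u1 = None"
      with \<open>u1 \<noteq> []\<close> u1 have "u ! (length u1 - 1) = None" "u ! Suc (length u1 - 1) = None"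
        by (simp_all add: nth_append last_conv_nth)
      with wf_nth_after_box[OF wf, of "length u1 - 1"] u1 show False by fastforce
    qed
    ultimately obtain u' z where "u1 = u' @ [Some z]"
      by (metis append_butlast_last_id not_None_eq)
    with u1 have w: "u = u' @ [Some z, None, Some t]" by simp
    moreover have "u' = [] \<or> last u' \<noteq> None"
      using wf_boxed_pair_neighbours[of u' z t "[]"] wf w by simp
    ultimately show thesis by (rule boxed)
  qed
qed

lemma wf_box_before_min:
  assumes wf: "wf_box_word w" and min: "\<forall>c\<in>set (letters w). a \<le> c"
    and i: "i < length w" "w ! i = Some a" "i \<noteq> 0"
  shows "2 \<le> i \<and> w ! (i - 1) = None \<and> w ! (i - 2) \<noteq> None"
proof -
  have Suc_pred: "Suc (i - 1) = i" using i by simp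
  have box: "w ! (i - 1) = None"
  proof (cases "w ! (i - 1)")
    case (Some b)
    then have "b < a"
      using wf_nth_increasing[OF wf, of "i - 1" b a] Suc_pred i by simp
    moreover have "Some b \<in> set w"
      using Some i by (metis less_imp_diff_less nth_mem)
    then have "b \<in> set (letters w)"
      unfolding set_letters by simp
    ultimately show ?thesis using min by fastforce
  qed
  have "i - 1 \<noteq> 0"
  proof
    assume "i - 1 = 0"
    with box i have "hd w = None" by (cases w) auto
    with wf_hd_not_box[OF wf] i show False by auto
  qed
  then have two: "2 \<le> i" by simp
  then have "Suc (i - 2) = i - 1" "Suc (i - 2) < length w" using i by simp_all
  then have "w ! (i - 2) \<noteq> None"
    using wf_nth_after_box[OF wf, of "i - 2"] box by fastforce
  with two box show ?thesis by blast
qed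

lemma split_at_nth_three:
  assumes "i < length w" "2 \<le> i"
  shows "w = take (i - 2) w @ [w ! (i - 2), w ! (i - 1), w ! i] @ drop (Suc i) w"
proof -
  have "drop (i - 2) w = [w ! (i - 2), w ! (i - 1), w ! i] @ drop (Suc i) w"
    using assms Cons_nth_drop_Suc[of "i - 2" w] Cons_nth_drop_Suc[of "i - 1" w]
      Cons_nth_drop_Suc[of i w]
    by (simp add: Suc_diff_Suc numeral_2_eq_2)
  then show ?thesis by (metis append_take_drop_id)
qed

lemma wf_split_before_min:
  assumes wf: "wf_box_word w" and min: "\<forall>c\<in>set (letters w). a \<le> c"
    and i: "i < length w" "w ! i = Some a" "i \<noteq> 0"
  obtains u y v where "w = u @ [Some y, None, Some a] @ v" "length u = i - 2" "2 \<le> i"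
proof -
  from wf_box_before_min[OF assms] obtain y
    where two: "2 \<le> i" and box: "w ! (i - 1) = None" and y: "w ! (i - 2) = Some y" by blast
  have "w = take (i - 2) w @ [Some y, None, Some a] @ drop (Suc i) w"
    using split_at_nth_three[OF i(1) two] box y i(2) by simp
  with two i(1) show ?thesis using that[of "take (i - 2) w"] by simp
qed

lemma finite_wf_box_words:
  fixes V :: "'a::linorder set"
  assumes "finite V"
  shows "finite {w. wf_box_word w \<and> distinct (letters w) \<and> set (letters w) \<subseteq> V}"
proof (rule finite_subset)
  show "finite {w. set w \<subseteq> insert None (Some ` V) \<and> length w \<le> 2 * card V}"
    using assms by (intro finite_lists_length_le) auto
  show "{w. wf_box_word w \<and> distinct (letters w) \<and> set (letters w) \<subseteq> V}
      \<subseteq> {w. set w \<subseteq> insert None (Some ` V) \<and> length w \<le> 2 * card V}"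
  proof clarify
    fix w :: "'a option list"
    assume w: "wf_box_word w" "distinct (letters w)" "set (letters w) \<subseteq> V"
    then have "length (letters w) \<le> card V"
      using assms by (metis card_mono distinct_card)
    then show "set w \<subseteq> insert None (Some ` V) \<and> length w \<le> 2 * card V"
      using w wf_length[of w] set_subset_letters[of w] by auto
  qed
qed

lemma segs_not_Nil: "segs w \<noteq> []"
  by (induction w rule: segs.induct) (auto split: list.splits)

lemma segs_Some: "segs (Some a # w) = (a # hd (segs w)) # tl (segs w)"
  using segs_not_Nil[of w] by (cases "segs w") auto

definition inner_segments_long :: "'a list list \<Rightarrow> bool" where
  "inner_segments_long ss = (\<forall>j. 0 < j \<and> j < length ss - 1 \<longrightarrow> 2 \<le> length (ss ! j))"

lemma inner_segments_long_Cons_same: "inner_segments_long (x # ss) = inner_segments_long (y # ss)"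
  unfolding inner_segments_long_def by (metis (no_types, lifting) length_Cons nth_Cons_pos)

lemma inner_segments_long_Cons_Cons:
  "inner_segments_long (x # y # zs) \<longleftrightarrow>
    (zs \<noteq> [] \<longrightarrow> 2 \<le> length y) \<and> inner_segments_long (y # zs)"
proof
  assume long: "inner_segments_long (x # y # zs)"
  have "2 \<le> length y" if "zs \<noteq> []"
    using that long[unfolded inner_segments_long_def, rule_format, of 1] by simp
  moreover have "inner_segments_long (y # zs)"
    unfolding inner_segments_long_def
  proof (intro allI impI)
    fix j assume "0 < j \<and> j < length (y # zs) - 1"
    then show "2 \<le> length ((y # zs) ! j)"
      using long[unfolded inner_segments_long_def, rule_format, of "Suc j"] by simp
  qed
  ultimately show "(zs \<noteq> [] \<longrightarrow> 2 \<le> length y) \<and> inner_segments_long (y # zs)" by blast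
next
  assume long: "(zs \<noteq> [] \<longrightarrow> 2 \<le> length y) \<and> inner_segments_long (y # zs)"
  show "inner_segments_long (x # y # zs)"
    unfolding inner_segments_long_def
  proof (intro allI impI)
    fix j assume j: "0 < j \<and> j < length (x # y # zs) - 1"
    show "2 \<le> length ((x # y # zs) ! j)"
    proof (cases "j = 1")
      case False
      then obtain k where "j = Suc k" "0 < k" using j by (cases j) auto
      then show ?thesis
        using long[THEN conjunct2, unfolded inner_segments_long_def, rule_format, of k] j by simp
    qed (use long j in auto)
  qed
qed

definition valid_segments :: "'a::linorder list list \<Rightarrow> bool" where
  "valid_segments ss \<longleftrightarrow> 1 \<le> length (hd ss) \<and> 1 \<le> length (last ss) \<and>
    (\<forall>s\<in>set ss. sorted_wrt (<) s) \<and> inner_segments_long ss"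

lemma valid_segments_Cons_Cons:
  "valid_segments ((a # b # s) # ss) \<longleftrightarrow> a < b \<and> valid_segments ((b # s) # ss)"
proof -
  have "sorted_wrt (<) (a # b # s) \<longleftrightarrow> a < b \<and> sorted_wrt (<) (b # s)"
    by (rule sorted_wrt2) (auto simp: transp_def)
  moreover have "inner_segments_long ((a # b # s) # ss) = inner_segments_long ((b # s) # ss)"
    by (rule inner_segments_long_Cons_same)
  ultimately show ?thesis unfolding valid_segments_def by (cases ss) auto
qed

lemma valid_segments_singleton_Cons:
  "valid_segments ([a] # (b # s) # ss) \<longleftrightarrow> (ss \<noteq> [] \<longrightarrow> s \<noteq> []) \<and> valid_segments ((b # s) # ss)"
  unfolding valid_segments_def using inner_segments_long_Cons_Cons[of "[a]" "b # s" ss]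
  by (cases s) auto

lemma valid_segments_iff_wf: "w \<noteq> [] \<Longrightarrow> valid_segments (segs w) \<longleftrightarrow> wf_box_word w"
proof (induction w rule: wf_box_word.induct)
  case (2 a)
  then show ?case by (simp add: valid_segments_def inner_segments_long_def)
next
  case (3 a b r)
  have "segs (Some a # Some b # r) = (a # b # hd (segs r)) # tl (segs r)"
       "segs (Some b # r) = (b # hd (segs r)) # tl (segs r)"
    by (simp_all only: segs_Some list.sel)
  then show ?case using 3 by (simp add: valid_segments_Cons_Cons)
next
  case (4 a b r)
  have "segs (Some a # None # Some b # r) = [a] # (b # hd (segs r)) # tl (segs r)"
    by (simp only: segs_Some segs.simps(2) list.sel)
  moreover have "segs (Some b # r) = (b # hd (segs r)) # tl (segs r)"
    by (simp only: segs_Some)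
  moreover have "(tl (segs r) \<noteq> [] \<longrightarrow> hd (segs r) \<noteq> []) \<longleftrightarrow> (r = [] \<or> hd r \<noteq> None)"
  proof (cases r)
    case (Cons c r')
    then show ?thesis
      using segs_not_Nil[of r'] by (cases c) (auto simp: segs_Some simp del: segs.simps(3))
  qed simp
  ultimately show ?case using 4 by (simp add: valid_segments_singleton_Cons)
next
  case (6 a r)
  have "segs (Some a # None # None # r) = [a] # [] # segs r"
    by (simp only: segs_Some segs.simps(2) list.sel)
  then show ?case
    using segs_not_Nil[of r] inner_segments_long_Cons_Cons[of "[a]" "[]" "segs r"]
    by (simp add: valid_segments_def)
qed (simp_all add: valid_segments_def)

lemma BP_iff:
  assumes "finite A"
  shows "w \<in> BP A \<longleftrightarrow> wf_box_word w \<and> distinct (letters w) \<and> set (letters w) = A"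
proof -
  let ?letters_ok = "(\<forall>a\<in>A. count_list w (Some a) = 1) \<and> set w \<subseteq> insert None (Some ` A)"
  have letters_ok: "?letters_ok \<longleftrightarrow> distinct (letters w) \<and> set (letters w) = A"
    unfolding count_list_letters set_subset_insert_None_iff by (rule distinct_set_eq_iff_count_list)
  show ?thesis
  proof (cases "None \<in> set w")
    case True
    then have "w \<in> BP A \<longleftrightarrow> ?letters_ok \<and> valid_segments (segs w)"
      unfolding BP_def valid_segments_def inner_segments_long_def by (auto simp: Let_def)
    moreover have "w \<noteq> []" using True by auto
    ultimately show ?thesis using letters_ok valid_segments_iff_wf by blast
  next
    case False
    then have w: "w = map Some (letters w)" by (simp add: map_Some_letters)
    have "w \<in> BP A \<longleftrightarrow> ?letters_ok \<and> w = map Some (sorted_list_of_set A)"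
      unfolding BP_def using False by auto
    also have "\<dots> \<longleftrightarrow> distinct (letters w) \<and> set (letters w) = A \<and> letters w = sorted_list_of_set A"
    proof -
      have "w = map Some (sorted_list_of_set A) \<longleftrightarrow> letters w = sorted_list_of_set A"
        using w inj_map_eq_map[of Some "letters w" "sorted_list_of_set A"] by (metis inj_Some)
      with letters_ok show ?thesis by blast
    qed
    also have "\<dots> \<longleftrightarrow> distinct (letters w) \<and> set (letters w) = A \<and> sorted_wrt (<) (letters w)"
      using sorted_list_of_set_unique[OF assms, of "letters w"] distinct_card[of "letters w"]
      by auto
    also have "\<dots> \<longleftrightarrow> wf_box_word w \<and> distinct (letters w) \<and> set (letters w) = A"
      using wf_map_Some[of "letters w"] w by auto
    finally show ?thesis .
  qed
qed

lemma finite_BP: "finite A \<Longrightarrow> finite (BP A)"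
  by (rule finite_subset[OF _ finite_wf_box_words]) (auto simp: BP_iff)

lemma mem_box_nbrs_iff:
  "X \<in> box_nbrs w \<longleftrightarrow> (\<exists>a b i. X = {a, b} \<and> 0 < i \<and> i + 1 < length w \<and> w ! i = None \<and>
    w ! (i - 1) = Some a \<and> w ! (i + 1) = Some b)"
  unfolding box_nbrs_def by blast

definition leading_box_nbr :: "nat option \<Rightarrow> nat option list \<Rightarrow> nat set set" where
  "leading_box_nbr c r =
    (case (c, r) of (Some a, None # Some b # _) \<Rightarrow> {{a, b}} | _ \<Rightarrow> {})"

lemma box_nbrs_Nil[simp]: "box_nbrs [] = {}"
  unfolding box_nbrs_def by simp

lemma box_nbrs_Cons: "box_nbrs (c # r) = leading_box_nbr c r \<union> box_nbrs r"
proof (intro set_eqI iffI)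
  fix X assume "X \<in> box_nbrs (c # r)"
  then obtain a b i where nbr: "X = {a, b}" "0 < i" "i + 1 < length (c # r)" "(c # r) ! i = None"
    "(c # r) ! (i - 1) = Some a" "(c # r) ! (i + 1) = Some b" unfolding mem_box_nbrs_iff by blast
  show "X \<in> leading_box_nbr c r \<union> box_nbrs r"
  proof (cases "i = 1")
    case True
    then obtain r' where r: "r = None # Some b # r'" using nbr
      by (cases r; cases "tl r") auto
    have "c = Some a" using nbr True by simp
    then show ?thesis using r nbr(1) unfolding leading_box_nbr_def by simp
  next
    case False
    then obtain j where j: "i = Suc j" "0 < j" using nbr(2) by (cases i) auto
    have "X \<in> box_nbrs r" unfolding mem_box_nbrs_iff
      using nbr j by (intro exI[of _ a] exI[of _ b] exI[of _ j]) (auto simp: nth_Cons')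
    then show ?thesis by blast
  qed
next
  fix X assume "X \<in> leading_box_nbr c r \<union> box_nbrs r"
  then show "X \<in> box_nbrs (c # r)"
  proof
    assume X: "X \<in> leading_box_nbr c r"
    then obtain a b r' where "c = Some a" "r = None # Some b # r'" "X = {a, b}"
      unfolding leading_box_nbr_def by (auto split: option.splits list.splits)
    then show ?thesis unfolding mem_box_nbrs_iff
      by (intro exI[of _ a] exI[of _ b] exI[of _ 1]) auto
  next
    assume "X \<in> box_nbrs r"
    then obtain a b i where nbr: "X = {a, b}" "0 < i" "i + 1 < length r" "r ! i = None"
      "r ! (i - 1) = Some a" "r ! (i + 1) = Some b" unfolding mem_box_nbrs_iff by blast
    then show ?thesis unfolding mem_box_nbrs_iff
      by (intro exI[of _ a] exI[of _ b] exI[of _ "Suc i"]) (auto simp: nth_Cons')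
  qed
qed

lemma leading_box_nbr_append:
  assumes "u = [] \<or> last (c # u) \<noteq> None" "v = [] \<or> hd v \<noteq> None"
  shows "leading_box_nbr c (u @ v) = leading_box_nbr c u"
proof (cases u)
  case Nil
  then show ?thesis
    using assms(2) unfolding leading_box_nbr_def
    by (cases v) (auto split: option.splits list.splits)
next
  case (Cons d u')
  show ?thesis
  proof (cases u')
    case Nil
    then have "d \<noteq> None" using assms(1) Cons by simp
    then show ?thesis
      using Cons Nil unfolding leading_box_nbr_def by (auto split: option.splits list.splits)
  next
    case (Cons e u'')
    then have u: "u = d # e # u''" using \<open>u = d # u'\<close> by simp
    show ?thesis unfolding u leading_box_nbr_def by (cases c; cases d; cases e) auto
  qed
qed

lemma box_nbrs_append:
  assumes "u = [] \<or> last u \<noteq> None" "v = [] \<or> hd v \<noteq> None"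
  shows "box_nbrs (u @ v) = box_nbrs u \<union> box_nbrs v"
  using assms(1)
proof (induction u)
  case (Cons c u)
  have "box_nbrs (u @ v) = box_nbrs u \<union> box_nbrs v"
    using Cons by (cases u) auto
  moreover have "leading_box_nbr c (u @ v) = leading_box_nbr c u"
    using leading_box_nbr_append[of u c v] Cons.prems assms(2) by auto
  ultimately show ?case by (simp add: box_nbrs_Cons Un_assoc)
qed simp

lemma box_nbrs_subset_letters: "X \<in> box_nbrs w \<Longrightarrow> X \<subseteq> set (letters w)"
proof -
  assume "X \<in> box_nbrs w"
  then obtain a b i where nbr: "X = {a, b}" "0 < i" "i + 1 < length w" "w ! i = None"
    "w ! (i - 1) = Some a" "w ! (i + 1) = Some b" unfolding mem_box_nbrs_iff by blast
  have "Some a \<in> set w" using nbr by (metis less_imp_diff_less nth_mem add_lessD1)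
  moreover have "Some b \<in> set w" using nbr by (metis nth_mem)
  ultimately show ?thesis using nbr(1) unfolding set_letters by auto
qed

lemma box_nbrs_snoc:
  "u = [] \<or> last u \<noteq> None \<Longrightarrow> box_nbrs (u @ [Some t]) = box_nbrs u"
  using box_nbrs_append[of u "[Some t]"] by (simp add: box_nbrs_Cons leading_box_nbr_def)

lemma box_nbrs_snoc_boxed:
  "u = [] \<or> last u \<noteq> None \<Longrightarrow> box_nbrs (u @ [Some z, None, Some t]) = insert {z, t} (box_nbrs u)"
  using box_nbrs_append[of u "[Some z, None, Some t]"]
  by (simp add: box_nbrs_Cons leading_box_nbr_def)

lemma box_nbrs_Cons_letter:
  "w = [] \<or> hd w \<noteq> None \<Longrightarrow> box_nbrs (Some t # w) = box_nbrs w"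
  using box_nbrs_append[of "[Some t]" w] by (simp add: box_nbrs_Cons leading_box_nbr_def)

lemma box_nbrs_Cons_boxed:
  "w = [] \<or> hd w \<noteq> None \<Longrightarrow> box_nbrs (Some t # None # Some z # w) = insert {t, z} (box_nbrs w)"
  using box_nbrs_append[of "[Some t, None, Some z]" w]
  by (simp add: box_nbrs_Cons leading_box_nbr_def)

lemma box_nbrs_boxed_pair:
  assumes "wf_box_word (u @ [Some y, None, Some z] @ v)"
  shows "box_nbrs (u @ [Some y, None, Some z] @ v) = insert {y, z} (box_nbrs u \<union> box_nbrs v)"
proof -
  have u: "u = [] \<or> last u \<noteq> None" and v: "v = [] \<or> hd v \<noteq> None"
    using wf_boxed_pair_neighbours[OF assms] by blast+
  have "box_nbrs ((u @ [Some y, None, Some z]) @ v) =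
      box_nbrs (u @ [Some y, None, Some z]) \<union> box_nbrs v"
    using v by (intro box_nbrs_append) simp_all
  then show ?thesis
    using box_nbrs_snoc_boxed[OF u] by simp
qed

definition box_words :: "nat set \<Rightarrow> nat set set \<Rightarrow> nat option list set" where
  "box_words V P = {w. wf_box_word w \<and> distinct (letters w) \<and> set (letters w) = V \<and> box_nbrs w = P}"

definition box_words_ge :: "nat set \<Rightarrow> nat set set \<Rightarrow> nat \<Rightarrow> nat option list set" where
  "box_words_ge V P t = {w \<in> box_words V P. w = [] \<or> t \<le> hd (letters w)}"

definition split_pairs ::
    "nat set \<Rightarrow> nat set set \<Rightarrow> nat \<Rightarrow> (nat option list \<times> nat option list) set" where
  "split_pairs V P t = {(u, v). wf_box_word u \<and> wf_box_word v \<and>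
     distinct (letters u @ letters v) \<and> set (letters u @ letters v) = V \<and>
     box_nbrs u \<union> box_nbrs v = P \<and> (u = [] \<or> last (letters u) < t)}"

definition signed_count :: "('a list \<times> 'b) set \<Rightarrow> int" where
  "signed_count X = (\<Sum>p\<in>X. (-1) ^ length (fst p))"

lemma finite_box_words: "finite V \<Longrightarrow> finite (box_words V P)"
  by (rule finite_subset[OF _ finite_wf_box_words]) (auto simp: box_words_def)

lemma finite_split_pairs: "finite V \<Longrightarrow> finite (split_pairs V P t)"
  by (rule finite_subset[OF _ finite_cartesian_product[OF finite_wf_box_words finite_wf_box_words]])
    (auto simp: split_pairs_def)

lemma box_nbrs_box_words: "w \<in> box_words V P \<Longrightarrow> P \<subseteq> Pow V"
  unfolding box_words_def using box_nbrs_subset_letters by fastforce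

lemma box_nbrs_split_pairs: "p \<in> split_pairs V P t \<Longrightarrow> P \<subseteq> Pow V"
  unfolding split_pairs_def using box_nbrs_subset_letters by fastforce

lemma signed_count_append_odd:
  assumes "odd (length b)"
  shows "signed_count ((\<lambda>(u, v). (u @ b, v)) ` X) = - signed_count X"
proof -
  have inj: "inj_on (\<lambda>(u, v). (u @ b, v)) X"
    by (auto simp: inj_on_def)
  have "signed_count ((\<lambda>(u, v). (u @ b, v)) ` X) = (\<Sum>p\<in>X. - ((-1) ^ length (fst p)))"
    unfolding signed_count_def sum.reindex[OF inj] using assms
    by (intro sum.cong) (auto simp: power_add)
  then show ?thesis
    by (simp add: signed_count_def sum_negf)
qed

lemma signed_count_parity:
  assumes "finite X"
  shows "signed_count X =
    int (card {p \<in> X. even (length (fst p))}) - int (card {p \<in> X. odd (length (fst p))})"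
proof -
  have X: "X = {p \<in> X. even (length (fst p))} \<union> {p \<in> X. odd (length (fst p))}" by auto
  have "signed_count X = (\<Sum>p\<in>{p \<in> X. even (length (fst p))}. (-1) ^ length (fst p)) +
      (\<Sum>p\<in>{p \<in> X. odd (length (fst p))}. (-1) ^ length (fst p))"
    unfolding signed_count_def by (subst X, rule sum.union_disjoint) (use assms in auto)
  also have "\<dots> = (\<Sum>p\<in>{p \<in> X. even (length (fst p))}. 1) + (\<Sum>p\<in>{p \<in> X. odd (length (fst p))}. - 1)"
    by (intro arg_cong2[where f = "(+)"] sum.cong) auto
  finally show ?thesis by simp
qed

lemma split_pairs_ending_letter:
  assumes tV: "t \<in> V" and unpaired: "\<not> (\<exists>z. z \<noteq> t \<and> {z, t} \<in> P)"
  shows "{p \<in> split_pairs V P (Suc t). fst p \<noteq> [] \<and> last (letters (fst p)) = t} =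
    (\<lambda>(u, v). (u @ [Some t], v)) ` split_pairs (V - {t}) P t"
proof (intro set_eqI iffI)
  fix p assume "p \<in> {p \<in> split_pairs V P (Suc t). fst p \<noteq> [] \<and> last (letters (fst p)) = t}"
  then obtain u v where p: "p = (u, v)" and uv: "wf_box_word u" "wf_box_word v"
    and dist: "distinct (letters u @ letters v)" and V: "set (letters u @ letters v) = V"
    and P: "box_nbrs u \<union> box_nbrs v = P" and ne: "u \<noteq> []" and last: "last (letters u) = t"
    unfolding split_pairs_def by auto
  from uv(1) ne show "p \<in> (\<lambda>(u, v). (u @ [Some t], v)) ` split_pairs (V - {t}) P t"
  proof (cases rule: wf_snoc_cases)
    case (letter u0 t')
    with last have u: "u = u0 @ [Some t]" by simp
    have "wf_box_word u0" "u0 = [] \<or> last (letters u0) < t"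
      using uv(1) wf_snoc[OF letter(2)] u by simp_all
    moreover have "distinct (letters u0 @ letters v)" "set (letters u0 @ letters v) = V - {t}"
      using dist V u by auto
    moreover have "box_nbrs u0 \<union> box_nbrs v = P"
      using P box_nbrs_snoc[OF letter(2)] u by simp
    ultimately have "(u0, v) \<in> split_pairs (V - {t}) P t"
      unfolding split_pairs_def using uv(2) by simp
    then show ?thesis using p u by force
  next
    case (boxed u0 z t')
    with last have "{z, t} \<in> P" "z \<noteq> t"
      using P box_nbrs_snoc_boxed[OF boxed(2)] dist by auto
    with unpaired show ?thesis by blast
  qed
next
  fix p assume "p \<in> (\<lambda>(u, v). (u @ [Some t], v)) ` split_pairs (V - {t}) P t"
  then obtain u v where p: "p = (u @ [Some t], v)" and uv: "wf_box_word u" "wf_box_word v"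
    and dist: "distinct (letters u @ letters v)" and V: "set (letters u @ letters v) = V - {t}"
    and P: "box_nbrs u \<union> box_nbrs v = P" and lt: "u = [] \<or> last (letters u) < t"
    unfolding split_pairs_def by auto
  have u: "u = [] \<or> last u \<noteq> None" using wf_last_not_box[OF uv(1)] .
  have "wf_box_word (u @ [Some t])" using wf_snoc[OF u] uv lt by simp
  moreover have "box_nbrs (u @ [Some t]) \<union> box_nbrs v = P" using box_nbrs_snoc[OF u] P by simp
  ultimately show "p \<in> {p \<in> split_pairs V P (Suc t). fst p \<noteq> [] \<and> last (letters (fst p)) = t}"
    unfolding split_pairs_def using p uv dist V tV by auto
qed

lemma split_pairs_ending_boxed:
  assumes zt: "z \<noteq> t" and zP: "{z, t} \<in> P" and zV: "z \<in> V" and tV: "t \<in> V"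
  shows "{p \<in> split_pairs V P (Suc t). fst p \<noteq> [] \<and> last (letters (fst p)) = t} =
    (\<lambda>(u, v). (u @ [Some z, None, Some t], v)) ` split_pairs (V - {z, t}) (P - {{z, t}}) z"
proof (intro set_eqI iffI)
  fix p assume "p \<in> {p \<in> split_pairs V P (Suc t). fst p \<noteq> [] \<and> last (letters (fst p)) = t}"
  then obtain u v where p: "p = (u, v)" and uv: "wf_box_word u" "wf_box_word v"
    and dist: "distinct (letters u @ letters v)" and V: "set (letters u @ letters v) = V"
    and P: "box_nbrs u \<union> box_nbrs v = P" and ne: "u \<noteq> []" and last: "last (letters u) = t"
    unfolding split_pairs_def by auto
  from uv(1) ne
  show "p \<in> (\<lambda>(u, v). (u @ [Some z, None, Some t], v)) ` split_pairs (V - {z, t}) (P - {{z, t}}) z"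
  proof (cases rule: wf_snoc_cases)
    case (letter u0 t')
    with last dist have "t \<notin> set (letters u0 @ letters v)" by auto
    then have "{z, t} \<notin> box_nbrs u0 \<union> box_nbrs v"
      using box_nbrs_subset_letters by auto
    with zP P box_nbrs_snoc[OF letter(2)] letter(1) show ?thesis by auto
  next
    case (boxed u0 z' t')
    with last have u: "u = u0 @ [Some z', None, Some t]" by simp
    with dist have fresh: "z' \<notin> set (letters u0 @ letters v)" "t \<notin> set (letters u0 @ letters v)"
      by auto
    then have "{z, t} \<notin> box_nbrs u0 \<union> box_nbrs v" "{z', t} \<notin> box_nbrs u0 \<union> box_nbrs v"
      using box_nbrs_subset_letters by auto
    moreover have Pu: "P = insert {z', t} (box_nbrs u0 \<union> box_nbrs v)"
      using P box_nbrs_snoc_boxed[OF boxed(2)] u by simp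
    ultimately have "{z, t} = {z', t}" using zP by auto
    then have z: "z' = z" using zt by (metis doubleton_eq_iff)
    have "wf_box_word u0" "u0 = [] \<or> last (letters u0) < z"
      using uv(1) wf_snoc_boxed[OF boxed(2)] u z by simp_all
    moreover have "distinct (letters u0 @ letters v)" "set (letters u0 @ letters v) = V - {z, t}"
      using dist V u z fresh by auto
    moreover have "box_nbrs u0 \<union> box_nbrs v = P - {{z, t}}"
      using Pu z \<open>{z, t} \<notin> box_nbrs u0 \<union> box_nbrs v\<close> by auto
    ultimately have "(u0, v) \<in> split_pairs (V - {z, t}) (P - {{z, t}}) z"
      unfolding split_pairs_def using uv(2) by simp
    then show ?thesis using p u z by force
  qed
next
  fix p
  assume "p \<in> (\<lambda>(u, v). (u @ [Some z, None, Some t], v)) ` split_pairs (V - {z, t}) (P - {{z, t}}) z"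
  then obtain u v where p: "p = (u @ [Some z, None, Some t], v)"
    and uv: "wf_box_word u" "wf_box_word v"
    and dist: "distinct (letters u @ letters v)" and V: "set (letters u @ letters v) = V - {z, t}"
    and P: "box_nbrs u \<union> box_nbrs v = P - {{z, t}}" and lt: "u = [] \<or> last (letters u) < z"
    unfolding split_pairs_def by auto
  have u: "u = [] \<or> last u \<noteq> None" using wf_last_not_box[OF uv(1)] .
  have "wf_box_word (u @ [Some z, None, Some t])" using wf_snoc_boxed[OF u] uv lt by simp
  moreover have "box_nbrs (u @ [Some z, None, Some t]) \<union> box_nbrs v = P"
    using box_nbrs_snoc_boxed[OF u] P zP by auto
  ultimately show "p \<in> {p \<in> split_pairs V P (Suc t). fst p \<noteq> [] \<and> last (letters (fst p)) = t}"
    unfolding split_pairs_def using p uv dist V zt zV tV by auto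
qed

lemma box_words_starting_letter:
  assumes tV: "t \<in> V" and unpaired: "\<not> (\<exists>z. z \<noteq> t \<and> {z, t} \<in> P)"
  shows "{w \<in> box_words V P. w \<noteq> [] \<and> hd (letters w) = t} =
    (\<lambda>w. Some t # w) ` box_words_ge (V - {t}) P t"
proof (intro set_eqI iffI)
  fix w assume "w \<in> {w \<in> box_words V P. w \<noteq> [] \<and> hd (letters w) = t}"
  then have wf: "wf_box_word w" and dist: "distinct (letters w)" and V: "set (letters w) = V"
    and P: "box_nbrs w = P" and ne: "w \<noteq> []" and hd: "hd (letters w) = t"
    unfolding box_words_def by auto
  from wf ne show "w \<in> (\<lambda>w. Some t # w) ` box_words_ge (V - {t}) P t"
  proof (cases rule: wf_Cons_cases)
    case (letter t' w')
    with hd have w: "w = Some t # w'" by simp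
    have "wf_box_word w'" "w' = [] \<or> t < hd (letters w')"
      using wf wf_Cons[OF letter(2)] w by simp_all
    then have "w' \<in> box_words_ge (V - {t}) P t"
      unfolding box_words_ge_def box_words_def
      using dist V P box_nbrs_Cons_letter[OF letter(2)] w by auto
    then show ?thesis using w by blast
  next
    case (boxed t' z w')
    with hd have "{z, t} \<in> P" "z \<noteq> t"
      using P box_nbrs_Cons_boxed[OF boxed(2)] dist by (auto simp: insert_commute)
    with unpaired show ?thesis by blast
  qed
next
  fix w assume "w \<in> (\<lambda>w. Some t # w) ` box_words_ge (V - {t}) P t"
  then obtain w' where w: "w = Some t # w'" and wf: "wf_box_word w'"
    and dist: "distinct (letters w')"
    and V: "set (letters w') = V - {t}" and P: "box_nbrs w' = P"
    and ge: "w' = [] \<or> t \<le> hd (letters w')"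
    unfolding box_words_ge_def box_words_def by auto
  have w': "w' = [] \<or> hd w' \<noteq> None" using wf_hd_not_box[OF wf] .
  have "w' = [] \<or> t < hd (letters w')"
    using ge wf_hd_letters_in[OF wf] V by (cases "w' = []") auto
  then have "wf_box_word w" using wf_Cons[OF w'] wf w by simp
  then show "w \<in> {w \<in> box_words V P. w \<noteq> [] \<and> hd (letters w) = t}"
    unfolding box_words_def using w dist V P box_nbrs_Cons_letter[OF w'] tV by auto
qed

lemma box_words_starting_boxed:
  assumes zt: "z \<noteq> t" and zP: "{z, t} \<in> P" and zV: "z \<in> V" and tV: "t \<in> V"
  shows "{w \<in> box_words V P. w \<noteq> [] \<and> hd (letters w) = t} =
    (\<lambda>w. Some t # None # Some z # w) ` box_words_ge (V - {z, t}) (P - {{z, t}}) z"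
proof (intro set_eqI iffI)
  fix w assume "w \<in> {w \<in> box_words V P. w \<noteq> [] \<and> hd (letters w) = t}"
  then have wf: "wf_box_word w" and dist: "distinct (letters w)" and V: "set (letters w) = V"
    and P: "box_nbrs w = P" and ne: "w \<noteq> []" and hd: "hd (letters w) = t"
    unfolding box_words_def by auto
  from wf ne
  show "w \<in> (\<lambda>w. Some t # None # Some z # w) ` box_words_ge (V - {z, t}) (P - {{z, t}}) z"
  proof (cases rule: wf_Cons_cases)
    case (letter t' w')
    with hd dist have "t \<notin> set (letters w')" by auto
    then have "{z, t} \<notin> box_nbrs w'"
      using box_nbrs_subset_letters by auto
    with zP P box_nbrs_Cons_letter[OF letter(2)] letter(1) show ?thesis by auto
  next
    case (boxed t' z' w')
    with hd have w: "w = Some t # None # Some z' # w'" by simp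
    with dist have fresh: "t \<notin> set (letters w')" "z' \<notin> set (letters w')" "z' \<noteq> t"
      by auto
    then have "{z, t} \<notin> box_nbrs w'"
      using box_nbrs_subset_letters by auto
    moreover have Pw: "P = insert {t, z'} (box_nbrs w')"
      using P box_nbrs_Cons_boxed[OF boxed(2)] w by simp
    ultimately have "{z, t} = {t, z'}" using zP by auto
    then have z: "z' = z" using zt by (metis doubleton_eq_iff)
    have "wf_box_word w'" "w' = [] \<or> z < hd (letters w')"
      using wf wf_Cons_boxed[OF boxed(2)] w z by simp_all
    then have "w' \<in> box_words_ge (V - {z, t}) (P - {{z, t}}) z"
      unfolding box_words_ge_def box_words_def
      using dist V Pw w z fresh \<open>{z, t} \<notin> box_nbrs w'\<close> by (auto simp: insert_commute)
    then show ?thesis using w z by blast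
  qed
next
  fix w assume "w \<in> (\<lambda>w. Some t # None # Some z # w) ` box_words_ge (V - {z, t}) (P - {{z, t}}) z"
  then obtain w' where w: "w = Some t # None # Some z # w'" and wf: "wf_box_word w'"
    and dist: "distinct (letters w')" and V: "set (letters w') = V - {z, t}"
    and P: "box_nbrs w' = P - {{z, t}}" and ge: "w' = [] \<or> z \<le> hd (letters w')"
    unfolding box_words_ge_def box_words_def by auto
  have w': "w' = [] \<or> hd w' \<noteq> None" using wf_hd_not_box[OF wf] .
  have "w' = [] \<or> z < hd (letters w')"
    using ge wf_hd_letters_in[OF wf] V by (cases "w' = []") auto
  then have "wf_box_word w" using wf_Cons_boxed[OF w'] wf w by simp
  then show "w \<in> {w \<in> box_words V P. w \<noteq> [] \<and> hd (letters w) = t}"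
    unfolding box_words_def using w dist V P box_nbrs_Cons_boxed[OF w'] zt zP zV tV
    by (auto simp: insert_commute)
qed

lemma signed_count_ending:
  assumes IH: "\<And>V' P' t'. V' \<subset> V \<Longrightarrow>
    signed_count (split_pairs V' P' t') = int (card (box_words_ge V' P' t'))"
  shows "signed_count {p \<in> split_pairs V P (Suc t). fst p \<noteq> [] \<and> last (letters (fst p)) = t}
       = - int (card {w \<in> box_words V P. w \<noteq> [] \<and> hd (letters w) = t})"
    (is "signed_count ?E = - int (card ?F)")
proof -
  have transfer: "signed_count ?E = - int (card ?F)"
    if E: "?E = (\<lambda>(u, v). (u @ b, v)) ` split_pairs V' P' t'"
      and F: "?F = (\<lambda>w. c @ w) ` box_words_ge V' P' t'"
      and "odd (length b)" and "V' \<subset> V" for b c V' P' t'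
  proof -
    have "signed_count ?E = - signed_count (split_pairs V' P' t')"
      unfolding E using \<open>odd (length b)\<close> by (rule signed_count_append_odd)
    also have "\<dots> = - int (card (box_words_ge V' P' t'))"
      using IH[OF \<open>V' \<subset> V\<close>] by simp
    also have "card (box_words_ge V' P' t') = card ?F"
      unfolding F by (rule card_image[symmetric]) (auto simp: inj_on_def)
    finally show ?thesis .
  qed
  consider (absent) "t \<notin> V"
    | (unpaired) "t \<in> V" "\<not> (\<exists>z. z \<noteq> t \<and> {z, t} \<in> P)"
    | (paired_outside) z where "{z, t} \<in> P" "z \<notin> V"
    | (paired) z where "z \<noteq> t" "{z, t} \<in> P" "z \<in> V" "t \<in> V"
    by blast
  then show ?thesis
  proof cases
    case absent
    have "?E = {}"
      using absent unfolding split_pairs_def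
      by (auto dest!: wf_letters_nonempty)
    moreover have "?F = {}"
      using absent wf_hd_letters_in unfolding box_words_def by blast
    ultimately show ?thesis by (simp only:) (simp add: signed_count_def)
  next
    case unpaired
    have "V - {t} \<subset> V" using unpaired by blast
    with unpaired show ?thesis
      by (intro transfer[of "[Some t]" _ _ _ "[Some t]"])
        (simp_all add: split_pairs_ending_letter box_words_starting_letter)
  next
    case (paired_outside z)
    then have "?E = {}" "?F = {}"
      using box_nbrs_split_pairs box_nbrs_box_words by blast+
    then show ?thesis by (simp only:) (simp add: signed_count_def)
  next
    case (paired z)
    have "V - {z, t} \<subset> V" using paired by blast
    with paired show ?thesis
      by (intro transfer[of "[Some z, None, Some t]" _ _ _ "[Some t, None, Some z]"])
        (simp_all add: split_pairs_ending_boxed box_words_starting_boxed)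
  qed
qed

lemma signed_count_split_pairs:
  "finite V \<Longrightarrow> signed_count (split_pairs V P t) = int (card (box_words_ge V P t))"
proof (induction V arbitrary: P t rule: finite_psubset_induct)
  case (psubset V)
  show ?case
  proof (induction t)
    case 0
    have "split_pairs V P 0 = (\<lambda>v. ([], v)) ` box_words V P" "box_words_ge V P 0 = box_words V P"
      unfolding split_pairs_def box_words_def box_words_ge_def by auto
    then show ?case
      by (simp add: signed_count_def sum.reindex inj_on_def)
  next
    case (Suc t)
    define E where "E = {p \<in> split_pairs V P (Suc t). fst p \<noteq> [] \<and> last (letters (fst p)) = t}"
    define F where "F = {w \<in> box_words V P. w \<noteq> [] \<and> hd (letters w) = t}"
    have E_split: "split_pairs V P (Suc t) = split_pairs V P t \<union> E" "split_pairs V P t \<inter> E = {}"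
      unfolding E_def split_pairs_def by auto
    have F_split: "box_words_ge V P t = box_words_ge V P (Suc t) \<union> F"
        "box_words_ge V P (Suc t) \<inter> F = {}"
      unfolding F_def box_words_ge_def by auto
    have fin: "finite (split_pairs V P t)" "finite E" "finite (box_words_ge V P (Suc t))" "finite F"
      using finite_split_pairs[OF psubset.hyps] finite_box_words[OF psubset.hyps]
      unfolding E_def F_def box_words_ge_def by auto
    have "signed_count (split_pairs V P (Suc t)) =
        signed_count (split_pairs V P t) + signed_count E"
      unfolding signed_count_def E_split(1) using fin E_split(2) by (simp add: sum.union_disjoint)
    also have "\<dots> = int (card (box_words_ge V P t)) - int (card F)"
      using Suc signed_count_ending[OF psubset.IH] unfolding E_def F_def by simp
    also have "card (box_words_ge V P t) = card (box_words_ge V P (Suc t)) + card F"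
      unfolding F_split(1) using fin F_split(2) by (simp add: card_Un_disjoint)
    finally show ?case by simp
  qed
qed

lemma inj_on_boxed_pair_infix:
  assumes "x \<noteq> a"
  shows "inj_on (\<lambda>(u, v). u @ [Some x, None, Some a] @ v)
    {(u, v). a \<notin> set (letters u) \<and> a \<notin> set (letters v)}"
proof (rule inj_onI, clarify)
  fix u1 v1 u2 v2
  assume a: "a \<notin> set (letters u1)" "a \<notin> set (letters v1)"
    "a \<notin> set (letters u2)" "a \<notin> set (letters v2)"
    and eq: "u1 @ [Some x, None, Some a] @ v1 = u2 @ [Some x, None, Some a] @ v2"
  have "Some a \<notin> set (u1 @ [Some x, None])" "Some a \<notin> set v1"
    using a assms unfolding set_letters by auto
  then have "u1 @ [Some x, None] = u2 @ [Some x, None] \<and> v1 = v2"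
    using append_Cons_eq_iff[of "Some a" "u1 @ [Some x, None]" v1 "u2 @ [Some x, None]" v2] eq
    by simp
  then show "u1 = u2 \<and> v1 = v2" by simp
qed

definition min_after_box :: "nat set \<Rightarrow> (nat \<Rightarrow> bool) \<Rightarrow> nat option list set" where
  "min_after_box A Q = {w \<in> BP A. \<exists>u y v. w = u @ [Some y, None, Some (Min A)] @ v \<and> Q (length u)}"

definition min_before_box :: "nat set \<Rightarrow> nat option list set" where
  "min_before_box A = {w \<in> BP A. \<exists>y v. w = Some (Min A) # None # Some y # v}"

lemma BP_Min_le:
  assumes "finite A" "w \<in> BP A"
  shows "wf_box_word w" "\<forall>c\<in>set (letters w). Min A \<le> c"
  using assms by (simp_all add: BP_iff)

lemma BP3_eq_min_after_box:
  assumes fA: "finite A"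
  shows "BP3 A = min_after_box A even"
proof (intro set_eqI iffI)
  fix w assume "w \<in> BP3 A"
  then obtain i where wB: "w \<in> BP A"
    and i: "i < length w" "w ! i = Some (Min A)" "odd (i + 1)" "i \<noteq> 0"
    unfolding BP3_def by blast
  obtain u y v where w: "w = u @ [Some y, None, Some (Min A)] @ v" "length u = i - 2" "2 \<le> i"
    by (rule wf_split_before_min[OF BP_Min_le[OF fA wB] i(1,2,4)])
  moreover have "i = length u + 2" using w(2,3) by simp
  with i(3) have "even (length u)" by simp
  ultimately show "w \<in> min_after_box A even"
    using wB unfolding min_after_box_def by blast
next
  fix w assume "w \<in> min_after_box A even"
  then obtain u y v where wB: "w \<in> BP A"
    and w: "w = u @ [Some y, None, Some (Min A)] @ v" "even (length u)"
    unfolding min_after_box_def by blast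
  then have "length u + 2 < length w \<and> w ! (length u + 2) = Some (Min A) \<and> odd (length u + 2 + 1) \<and>
      length u + 2 \<noteq> 0"
    by (simp add: nth_append)
  with wB show "w \<in> BP3 A"
    unfolding BP3_def by blast
qed

lemma BP1_eq_min_after_box_Un_min_before_box:
  assumes fA: "finite A"
  shows "BP1 A = min_after_box A odd \<union> min_before_box A"
proof (intro set_eqI iffI)
  fix w assume w: "w \<in> BP1 A"
  then have wB: "w \<in> BP A" unfolding BP1_def by simp
  note wf = BP_Min_le(1)[OF fA wB]
  from w have "(\<exists>i<length w. w ! i = Some (Min A) \<and> even (i + 1)) \<or>
      (2 \<le> length w \<and> w ! 0 = Some (Min A) \<and> w ! 1 = None)"
    unfolding BP1_def by simp
  then consider (even_pos) i where "i < length w" "w ! i = Some (Min A)" "even (i + 1)"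
    | (first) "2 \<le> length w" "w ! 0 = Some (Min A)" "w ! 1 = None"
    by (elim disjE exE conjE) auto
  then show "w \<in> min_after_box A odd \<union> min_before_box A"
  proof cases
    case (even_pos i)
    then have "odd i" by simp
    then have "i \<noteq> 0" using odd_pos[of i] by simp
    then obtain u y v where w: "w = u @ [Some y, None, Some (Min A)] @ v" "length u = i - 2" "2 \<le> i"
      by (rule wf_split_before_min[OF BP_Min_le[OF fA wB] even_pos(1,2)])
    moreover have "i = length u + 2" using w(2,3) by simp
    with even_pos(3) have "odd (length u)" by simp
    ultimately show ?thesis
      using wB unfolding min_after_box_def by blast
  next
    case first
    then obtain c d r where "w = c # d # r"
      by (auto simp: numeral_2_eq_2 Suc_le_length_iff)
    with first have r: "w = Some (Min A) # None # r" by simp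
    have "\<exists>y v. r = Some y # v"
    proof (cases r)
      case (Cons e v)
      with wf r show ?thesis by (cases e) auto
    qed (use wf r in simp)
    with wB r have "w \<in> min_before_box A"
      unfolding min_before_box_def by auto
    then show ?thesis by blast
  qed
next
  fix w assume "w \<in> min_after_box A odd \<union> min_before_box A"
  then show "w \<in> BP1 A"
  proof
    assume "w \<in> min_after_box A odd"
    then obtain u y v where wB: "w \<in> BP A"
      and w: "w = u @ [Some y, None, Some (Min A)] @ v" "odd (length u)"
      unfolding min_after_box_def by blast
    then have "length u + 2 < length w \<and> w ! (length u + 2) = Some (Min A) \<and>
        even (length u + 2 + 1)"
      by (simp add: nth_append)
    with wB show ?thesis
      unfolding BP1_def by blast
  next
    assume "w \<in> min_before_box A"
    then obtain y v where wB: "w \<in> BP A" and w: "w = Some (Min A) # None # Some y # v"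
      unfolding min_before_box_def by blast
    then have "2 \<le> length w \<and> w ! 0 = Some (Min A) \<and> w ! 1 = None" by simp
    with wB show ?thesis
      unfolding BP1_def by blast
  qed
qed

lemma min_box_partner:
  assumes fA: "finite A" and w: "w \<in> min_after_box A Q \<union> min_before_box A"
  shows "\<exists>x\<in>A. x \<noteq> Min A \<and> {Min A, x} \<in> box_nbrs w"
proof -
  have wB: "w \<in> BP A" using w unfolding min_after_box_def min_before_box_def by blast
  then have wf: "wf_box_word w" and dist: "distinct (letters w)" and A: "set (letters w) = A"
    using BP_iff[OF fA] by blast+
  from w consider (after) u y v where "w = u @ [Some y, None, Some (Min A)] @ v"
    | (before) y v where "w = Some (Min A) # None # Some y # v"
    unfolding min_after_box_def min_before_box_def by blast
  then show ?thesis
  proof cases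
    case (after u y v)
    with wf have "{Min A, y} \<in> box_nbrs w"
      using box_nbrs_boxed_pair by (simp add: insert_commute)
    moreover have "y \<in> A" "y \<noteq> Min A" using after dist A by auto
    ultimately show ?thesis by blast
  next
    case (before y v)
    with wf have "v = [] \<or> hd v \<noteq> None" by simp
    with before have "{Min A, y} \<in> box_nbrs w"
      using box_nbrs_Cons_boxed by simp
    moreover have "y \<in> A" "y \<noteq> Min A" using before dist A by auto
    ultimately show ?thesis by blast
  qed
qed

lemma min_after_box_disjoint:
  assumes "finite A"
  shows "min_after_box A Q \<inter> min_before_box A = {}"
proof -
  have False if "w \<in> BP A" "w = u @ [Some y, None, Some (Min A)] @ v"
      "w = Some (Min A) # None # Some y' # v'" for w u y v y' v'
  proof -
    have "distinct (letters w)" using that(1) BP_iff[OF assms] by blast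
    then show False using that(2,3) by (cases u) auto
  qed
  then show ?thesis
    unfolding min_after_box_def min_before_box_def by blast
qed

lemma fibre_min_after_box:
  assumes fA: "finite A" and x: "x \<in> A" "x \<noteq> Min A" "{Min A, x} \<in> S"
  shows "{w \<in> min_after_box A Q. box_nbrs w = S} =
    (\<lambda>(u, v). u @ [Some x, None, Some (Min A)] @ v) `
      {p \<in> split_pairs (A - {Min A, x}) (S - {{Min A, x}}) x. Q (length (fst p))}"
    (is "?L = ?g ` ?R")
proof (intro set_eqI iffI)
  fix w assume "w \<in> ?L"
  then obtain u y v where wB: "w \<in> BP A" and S: "box_nbrs w = S"
    and w: "w = u @ [Some y, None, Some (Min A)] @ v" and Q: "Q (length u)"
    unfolding min_after_box_def by blast
  have wf: "wf_box_word w" and dist: "distinct (letters w)" and A: "set (letters w) = A"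
    using BP_iff[OF fA] wB by blast+
  have ends: "u = [] \<or> last u \<noteq> None" "v = [] \<or> hd v \<noteq> None"
    using wf_boxed_pair_neighbours wf w by blast+
  have uv: "wf_box_word u" "wf_box_word v" "u = [] \<or> last (letters u) < y"
    using wf_boxed_pair_iff[OF ends] wf w by blast+
  have bw: "box_nbrs w = insert {y, Min A} (box_nbrs u \<union> box_nbrs v)"
    using box_nbrs_boxed_pair wf w by blast
  have fresh: "Min A \<notin> set (letters u)" "Min A \<notin> set (letters v)" "y \<notin> set (letters u)"
    "y \<notin> set (letters v)" "y \<noteq> Min A"
    using dist w by auto
  then have "{Min A, x} \<notin> box_nbrs u \<union> box_nbrs v"
    using box_nbrs_subset_letters by blast
  then have "{Min A, x} = {y, Min A}" using x(3) S bw by auto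
  then have y: "y = x" using x(2) by (metis doubleton_eq_iff)
  have "(u, v) \<in> split_pairs (A - {Min A, x}) (S - {{Min A, x}}) x"
    unfolding split_pairs_def using uv y dist A w fresh S bw \<open>{Min A, x} \<notin> _\<close>
    by (auto simp: insert_commute)
  with Q w y show "w \<in> ?g ` ?R" by force
next
  fix w assume w_in: "w \<in> ?g ` ?R"
  have min: "Min A \<in> A" using fA x(1) Min_in by blast
  from w_in obtain u v where uv_in: "(u, v) \<in> ?R" and w: "w = u @ [Some x, None, Some (Min A)] @ v"
    by auto
  then have Q: "Q (length u)"
    and uv: "wf_box_word u" "wf_box_word v" and dist: "distinct (letters u @ letters v)"
    and V: "set (letters u @ letters v) = A - {Min A, x}"
    and P: "box_nbrs u \<union> box_nbrs v = S - {{Min A, x}}" and lt: "u = [] \<or> last (letters u) < x"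
    unfolding split_pairs_def by simp_all
  have ends: "u = [] \<or> last u \<noteq> None" "v = [] \<or> hd v \<noteq> None"
    using wf_last_not_box wf_hd_not_box uv by blast+
  have "v = [] \<or> Min A < hd (letters v)"
  proof (cases "v = []")
    case False
    then have "hd (letters v) \<in> A - {Min A}"
      using wf_hd_letters_in[OF uv(2)] V by auto
    then show ?thesis using fA by (simp add: order.not_eq_order_implies_strict)
  qed simp
  then have wf: "wf_box_word w"
    using wf_boxed_pair_iff[OF ends] uv lt w by blast
  moreover have "distinct (letters w)" "set (letters w) = A"
    using dist V w x(1,2) min by auto
  ultimately have "w \<in> BP A" using BP_iff[OF fA] by blast
  moreover have "box_nbrs w = S"
    using box_nbrs_boxed_pair[OF wf[unfolded w]] P x(3) w by (auto simp: insert_commute)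
  ultimately show "w \<in> ?L"
    using Q w unfolding min_after_box_def by blast
qed

lemma fibre_min_before_box:
  assumes fA: "finite A" and x: "x \<in> A" "x \<noteq> Min A" "{Min A, x} \<in> S"
  shows "{w \<in> min_before_box A. box_nbrs w = S} =
    (\<lambda>v. Some (Min A) # None # Some x # v) ` box_words_ge (A - {Min A, x}) (S - {{Min A, x}}) x"
    (is "?L = ?g ` ?R")
proof (intro set_eqI iffI)
  fix w assume "w \<in> ?L"
  then obtain y v where wB: "w \<in> BP A" and S: "box_nbrs w = S"
    and w: "w = Some (Min A) # None # Some y # v"
    unfolding min_before_box_def by blast
  have wf: "wf_box_word w" and dist: "distinct (letters w)" and A: "set (letters w) = A"
    using BP_iff[OF fA] wB by blast+
  have hv: "v = [] \<or> hd v \<noteq> None" using wf w by simp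
  have v: "wf_box_word v" "v = [] \<or> y < hd (letters v)"
    using wf_Cons_boxed[OF hv] wf w by simp_all
  have bw: "box_nbrs w = insert {Min A, y} (box_nbrs v)"
    using box_nbrs_Cons_boxed[OF hv] w by simp
  have fresh: "Min A \<notin> set (letters v)" "y \<notin> set (letters v)" "y \<noteq> Min A"
    using dist w by auto
  then have "{Min A, x} \<notin> box_nbrs v"
    using box_nbrs_subset_letters by blast
  then have "{Min A, x} = {Min A, y}" using x(3) S bw by auto
  then have y: "y = x" using x(2) by (metis doubleton_eq_iff)
  have "v \<in> ?R"
    unfolding box_words_ge_def box_words_def
    using v dist A S bw w y fresh \<open>{Min A, x} \<notin> _\<close> by auto
  with w y show "w \<in> ?g ` ?R" by blast
next
  fix w assume w_in: "w \<in> ?g ` ?R"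
  have min: "Min A \<in> A" using fA x(1) Min_in by blast
  from w_in obtain v where w: "w = Some (Min A) # None # Some x # v" and v: "wf_box_word v"
    and dist: "distinct (letters v)" and V: "set (letters v) = A - {Min A, x}"
    and P: "box_nbrs v = S - {{Min A, x}}" and ge: "v = [] \<or> x \<le> hd (letters v)"
    unfolding box_words_ge_def box_words_def by auto
  have hv: "v = [] \<or> hd v \<noteq> None" using wf_hd_not_box[OF v] .
  have "v = [] \<or> x < hd (letters v)"
    using ge wf_hd_letters_in[OF v] V by (cases "v = []") auto
  then have "wf_box_word w"
    using wf_Cons_boxed[OF hv] v w by simp
  moreover have "distinct (letters w)" "set (letters w) = A"
    using dist V w x(1,2) min by auto
  ultimately have "w \<in> BP A" using BP_iff[OF fA] by blast
  moreover have "box_nbrs w = S"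
    using box_nbrs_Cons_boxed[OF hv] P x(3) w by auto
  ultimately show "w \<in> ?L"
    using w unfolding min_before_box_def by blast
qed

lemma card_BP1_fibre_eq_BP3_fibre:
  assumes fA: "finite A"
  shows "card {w \<in> BP1 A. box_nbrs w = S} = card {w \<in> BP3 A. box_nbrs w = S}"
proof (cases "\<exists>x\<in>A. x \<noteq> Min A \<and> {Min A, x} \<in> S")
  case False
  then have "{w \<in> BP1 A. box_nbrs w = S} = {}" "{w \<in> BP3 A. box_nbrs w = S} = {}"
    using min_box_partner[OF fA]
    unfolding BP1_eq_min_after_box_Un_min_before_box[OF fA] BP3_eq_min_after_box[OF fA] by blast+
  then show ?thesis by (simp only:)
next
  case True
  then obtain x where x: "x \<in> A" "x \<noteq> Min A" "{Min A, x} \<in> S" by blast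
  define V where "V = A - {Min A, x}"
  define P where "P = S - {{Min A, x}}"
  have after: "card {w \<in> min_after_box A Q. box_nbrs w = S} =
      card {p \<in> split_pairs V P x. Q (length (fst p))}"
    for Q
    unfolding fibre_min_after_box[OF fA x] V_def P_def
    by (rule card_image, rule inj_on_subset[OF inj_on_boxed_pair_infix[OF x(2)]])
      (auto simp: split_pairs_def)
  have before: "card {w \<in> min_before_box A. box_nbrs w = S} = card (box_words_ge V P x)"
    unfolding fibre_min_before_box[OF fA x] V_def P_def
    by (rule card_image) (auto simp: inj_on_def)
  have fin: "finite {w \<in> min_after_box A odd. box_nbrs w = S}"
      "finite {w \<in> min_before_box A. box_nbrs w = S}"
    by (rule finite_subset[OF _ finite_BP[OF fA]],
        force simp: min_after_box_def min_before_box_def)+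
  have "{w \<in> BP1 A. box_nbrs w = S} =
      {w \<in> min_after_box A odd. box_nbrs w = S} \<union> {w \<in> min_before_box A. box_nbrs w = S}"
    unfolding BP1_eq_min_after_box_Un_min_before_box[OF fA] by blast
  moreover have
    "{w \<in> min_after_box A odd. box_nbrs w = S} \<inter> {w \<in> min_before_box A. box_nbrs w = S} = {}"
    using min_after_box_disjoint[OF fA, of odd] by blast
  ultimately have "card {w \<in> BP1 A. box_nbrs w = S} =
      card {w \<in> min_after_box A odd. box_nbrs w = S} +
      card {w \<in> min_before_box A. box_nbrs w = S}"
    using card_Un_disjoint[OF fin] by simp
  also have "\<dots> = card {w \<in> BP3 A. box_nbrs w = S}"
    using signed_count_parity[OF finite_split_pairs, of V P x] signed_count_split_pairs[of V P x] fA
    unfolding BP3_eq_min_after_box[OF fA] after before V_def by simp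
  finally show ?thesis .
qed

lemma bij_betw_fibrewise:
  assumes "finite X" "finite Y" and "\<And>s. card {x \<in> X. f x = s} = card {y \<in> Y. g y = s}"
  shows "\<exists>\<phi>. bij_betw \<phi> X Y \<and> (\<forall>x\<in>X. g (\<phi> x) = f x)"
proof -
  have "\<forall>s. \<exists>h. bij_betw h {x \<in> X. f x = s} {y \<in> Y. g y = s}"
    using assms by (auto intro!: finite_same_card_bij)
  then obtain h where h: "\<And>s. bij_betw (h s) {x \<in> X. f x = s} {y \<in> Y. g y = s}"
    by metis
  define \<phi> where "\<phi> x = h (f x) x" for x
  have maps: "\<phi> x \<in> Y \<and> g (\<phi> x) = f x" if "x \<in> X" for x
    using bij_betwE[OF h[of "f x"]] that unfolding \<phi>_def by blast
  have "inj_on \<phi> X"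
  proof (rule inj_onI)
    fix x x' assume xx': "x \<in> X" "x' \<in> X" "\<phi> x = \<phi> x'"
    then have "f x = f x'" using maps by metis
    with xx' show "x = x'"
      using bij_betw_imp_inj_on[OF h[of "f x"]] unfolding \<phi>_def by (auto dest: inj_onD)
  qed
  moreover have "Y \<subseteq> \<phi> ` X"
  proof
    fix y assume "y \<in> Y"
    then obtain x where "x \<in> X" "f x = g y" "y = h (g y) x"
      using bij_betw_imp_surj_on[OF h[of "g y"]] by blast
    then have "x \<in> X" "y = \<phi> x" unfolding \<phi>_def by simp_all
    then show "y \<in> \<phi> ` X" by blast
  qed
  ultimately show ?thesis
    using maps by (auto simp: bij_betw_def)
qed

theorem lemma2p2:
  fixes A :: "nat set"
  assumes "finite A" and "\<forall>a\<in>A. 0 < a"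
  shows "\<exists>\<phi>. bij_betw \<phi> (BP1 A) (BP3 A) \<and> (\<forall>w\<in>BP1 A. box_nbrs (\<phi> w) = box_nbrs w)"
proof (rule bij_betw_fibrewise)
  show "finite (BP1 A)" "finite (BP3 A)"
    using finite_BP[OF assms(1)] unfolding BP1_def BP3_def by auto
  show "card {w \<in> BP1 A. box_nbrs w = S} = card {w \<in> BP3 A. box_nbrs w = S}" for S
    by (rule card_BP1_fibre_eq_BP3_fibre[OF assms(1)])
qed

end
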